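(* Let $1\le k<n$, let $P,Q\in\mathbb{M}_n$ be rank-$k$ orthogonal projections and $\theta_1,\theta_2\in\mathbb{R}$. Then $\operatorname{span}_{\mathbb{R}}e^{i\theta_1}S(P)=\operatorname{span}_{\mathbb{R}}e^{i\theta_2}S(Q)$ if and only if $P=Q$ and $\theta_1\equiv\theta_2\pmod{\pi}$.
   Context: For $A\in\mathbb{M}_n$: $w_k(A)=\max\{|\operatorname{tr}(AP)|: P=P^*=P^2,\operatorname{tr}P=k\}$. For a rank-$k$ orthogonal projection $P$, $S(P)=\{B\in\mathbb{M}_n:\operatorname{tr}(BP)=w_k(B)\}$. *)

theory Defs
  imports "HOL-Analysis.Analysis"
begin

text \<open>Complex n x n matrices are rendered as complex^'n^'n, with n = CARD('n).\<close>

definition cadj :: "complex^'n^'n \<Rightarrow> complex^'n^'n" where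
  "cadj A = (\<chi> i j. cnj (A $ j $ i))"

definition orth_proj :: "nat \<Rightarrow> complex^'n^'n \<Rightarrow> bool" where
  "orth_proj k P \<longleftrightarrow> P = cadj P \<and> P ** P = P \<and> trace P = of_nat k"

definition wk :: "nat \<Rightarrow> complex^'n^'n \<Rightarrow> real" where
  "wk k A = Sup {cmod (trace (A ** P)) | P. orth_proj k P}"

definition Sset :: "nat \<Rightarrow> complex^'n^'n \<Rightarrow> (complex^'n^'n) set" where
  "Sset k P = {B. trace (B ** P) = complex_of_real (wk k B)}"

definition cscale :: "complex \<Rightarrow> complex^'n^'n \<Rightarrow> complex^'n^'n" where
  "cscale c A = (\<chi> i j. c * A $ i $ j)"

end

theory Submission imports Defs begin

text \<open>
  Membership of e^{i\<theta>} B in the real span of e^{i\<theta>'} S(Q) is detected by the real-linear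
  functional X \<mapsto> Im (e^{-i\<theta>'} tr(XQ)), which vanishes on that span. Testing it on
  e^{i\<theta>} I and on e^{i\<theta>} ((1 - i) P + i I), both elements of e^{i\<theta>} S(P), gives
  sin(\<theta> - \<theta>') = 0 and tr(PQ) = k. For rank-k projections, tr(PQ) = k - \<parallel>(I - P)Q\<parallel>^2, so the
  latter forces PQ = Q, and symmetrically QP = P, hence P = Q. Conversely, if \<theta> - \<theta>' \<in> \<pi>\<int>
  then e^{i\<theta>} = \<plusminus>e^{i\<theta>'}, and a real rescaling does not change a real span.
\<close>

lemma orth_projD:
  assumes "orth_proj k P"
  shows "cadj P = P" "P ** P = P" "trace P = of_nat k"
  using assms unfolding orth_proj_def by metis+

lemma matrix_mul_add_rdistrib:
  "((A::'a::semiring_1^'n^'m) + B) ** C = A ** C + B ** C"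
  by (simp add: vec_eq_iff matrix_matrix_mult_def distrib_right sum.distrib)

lemma matrix_mul_diff_ldistrib:
  "(A::'a::ring_1^'n^'m) ** (B - C) = A ** B - A ** C"
  by (simp add: vec_eq_iff matrix_matrix_mult_def right_diff_distrib sum_subtractf)

lemma matrix_mul_diff_rdistrib:
  "((A::'a::ring_1^'n^'m) - B) ** C = A ** C - B ** C"
  by (simp add: vec_eq_iff matrix_matrix_mult_def left_diff_distrib sum_subtractf)

lemma cadj_mult: "cadj (A ** B) = cadj B ** cadj (A::complex^'n^'n)"
  by (simp add: cadj_def vec_eq_iff matrix_matrix_mult_def mult.commute)

lemma cadj_id_minus: "cadj (mat 1 - P) = mat 1 - cadj (P::complex^'n^'n)"
  by (simp add: cadj_def vec_eq_iff mat_def)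

lemma idempotent_id_minus:
  assumes "P ** P = (P::'a::ring_1^'n^'n)"
  shows "(mat 1 - P) ** (mat 1 - P) = mat 1 - P"
  using assms by (simp add: matrix_mul_diff_ldistrib matrix_mul_diff_rdistrib)

lemma trace_cscale_mult: "trace (cscale c A ** B) = c * trace (A ** (B::complex^'n^'n))"
  by (simp add: trace_def cscale_def matrix_matrix_mult_def sum_distrib_left mult.assoc)

lemma cscale_of_real: "cscale (complex_of_real r) A = r *\<^sub>R (A::complex^'n^'n)"
  unfolding cscale_def vec_eq_iff
  by (simp only: vec_lambda_beta vector_scaleR_component) (simp add: scaleR_conv_of_real)

lemma cscale_cscale: "cscale a (cscale b A) = cscale (a * b) (A::complex^'n^'n)"
  by (simp add: cscale_def vec_eq_iff mult.assoc)

lemma norm_matrix_power2: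
  "(norm (M::complex^'n^'m))\<^sup>2 = (\<Sum>i\<in>UNIV. \<Sum>j\<in>UNIV. (cmod (M $ i $ j))\<^sup>2)"
  by (simp add: norm_vec_def L2_set_def sum_nonneg)

lemma trace_mult_cadj_self: "trace (M ** cadj M) = complex_of_real ((norm (M::complex^'n^'n))\<^sup>2)"
  unfolding norm_matrix_power2 of_real_sum complex_norm_square
  by (simp add: trace_def cadj_def matrix_matrix_mult_def)

lemma trace_proj_mult:
  assumes "cadj A = A" "A ** A = A" "cadj B = B" "B ** B = (B::complex^'n^'n)"
  shows "trace (A ** B) = complex_of_real ((norm (A ** B))\<^sup>2)"
proof -
  have "trace ((A ** B) ** cadj (A ** B)) = trace (A ** ((B ** B) ** A))"
    using assms(1,3) by (simp add: cadj_mult matrix_mul_assoc)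
  also have "\<dots> = trace (((B ** B) ** A) ** A)"
    by (rule trace_mul_sym)
  also have "((B ** B) ** A) ** A = B ** A"
    using assms(2,4) by (simp add: matrix_mul_assoc[symmetric])
  also have "trace (B ** A) = trace (A ** B)"
    by (rule trace_mul_sym)
  finally show ?thesis
    by (simp add: trace_mult_cadj_self)
qed

lemma trace_compl_proj_mult:
  assumes "orth_proj k (Q::complex^'n^'n)"
  shows "trace ((mat 1 - P) ** Q) = of_nat k - trace (P ** Q)"
  using orth_projD(3)[OF assms] by (simp add: matrix_mul_diff_rdistrib trace_sub)

lemma trace_orth_proj_mult_bounds:
  assumes "orth_proj k P" "orth_proj k (Q::complex^'n^'n)"
  obtains a where "trace (P ** Q) = complex_of_real a" "0 \<le> a" "a \<le> real k"
proof -
  note P = orth_projD[OF assms(1)] and Q = orth_projD[OF assms(2)]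
  define a b where "a = (norm (P ** Q))\<^sup>2" and "b = (norm ((mat 1 - P) ** Q))\<^sup>2"
  have a: "trace (P ** Q) = complex_of_real a"
    unfolding a_def using P Q by (intro trace_proj_mult)
  have "trace ((mat 1 - P) ** Q) = complex_of_real b"
    unfolding b_def using P Q
    by (intro trace_proj_mult) (simp_all add: cadj_id_minus idempotent_id_minus)
  then have "complex_of_real (a + b) = of_nat k"
    using a trace_compl_proj_mult[OF assms(2), of P] by (metis add.commute diff_add_cancel of_real_add)
  then have "a + b = real k"
    by (metis of_real_eq_iff of_real_of_nat_eq)
  moreover have "0 \<le> a" "0 \<le> b"
    unfolding a_def b_def by simp_all
  ultimately show thesis
    using that a by simp
qed

lemma proj_mult_eq_if_trace_compl_mult_eq_0:
  assumes "cadj P = P" "P ** P = P" "cadj Q = Q" "Q ** Q = (Q::complex^'n^'n)"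
    and "trace ((mat 1 - P) ** Q) = 0"
  shows "P ** Q = Q"
proof -
  have "trace ((mat 1 - P) ** Q) = complex_of_real ((norm ((mat 1 - P) ** Q))\<^sup>2)"
    using assms(1-4) by (intro trace_proj_mult) (simp_all add: cadj_id_minus idempotent_id_minus)
  with assms(5) have "(mat 1 - P) ** Q = 0"
    by simp
  then show ?thesis
    by (simp add: matrix_mul_diff_rdistrib)
qed

lemma orth_proj_eq_if_trace_mult:
  assumes "orth_proj k P" "orth_proj k (Q::complex^'n^'n)" "trace (P ** Q) = of_nat k"
  shows "P = Q"
proof -
  note P = orth_projD[OF assms(1)] and Q = orth_projD[OF assms(2)]
  have "trace ((mat 1 - P) ** Q) = 0"
    by (simp only: trace_compl_proj_mult[OF assms(2)] assms(3) diff_self)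
  then have PQ: "P ** Q = Q"
    by (rule proj_mult_eq_if_trace_compl_mult_eq_0[OF P(1,2) Q(1,2)])
  have "trace ((mat 1 - Q) ** P) = 0"
    by (simp only: trace_compl_proj_mult[OF assms(1)] trace_mul_sym[of Q P] assms(3) diff_self)
  then have QP: "Q ** P = P"
    by (rule proj_mult_eq_if_trace_compl_mult_eq_0[OF Q(1,2) P(1,2)])
  have "Q = cadj (P ** Q)"
    using PQ Q(1) by simp
  also have "\<dots> = Q ** P"
    using P(1) Q(1) by (simp add: cadj_mult)
  finally show ?thesis
    using QP by simp
qed

lemma wk_mat_1:
  assumes "orth_proj k (P::complex^'n^'n)"
  shows "wk k (mat 1::complex^'n^'n) = real k"
  unfolding wk_def
proof (rule cSup_eq_maximum)
  show "real k \<in> {cmod (trace ((mat 1::complex^'n^'n) ** P')) |P'. orth_proj k P'}"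
    using assms orth_projD(3)[OF assms] by force
qed (auto dest: orth_projD(3))

lemma mat_1_in_Sset: "orth_proj k (P::complex^'n^'n) \<Longrightarrow> mat 1 \<in> Sset k P"
  by (simp add: Sset_def wk_mat_1 orth_projD(3))

text \<open>
  Against a rank-k projection P' the trace of (1 - i) P + i I is a + i(k - a) with
  a = tr(PP') \<in> [0, k]; its modulus is at most k, with equality for P' = P.
\<close>

definition tilt_proj :: "complex^'n^'n \<Rightarrow> complex^'n^'n" where
  "tilt_proj P = cscale (1 - \<i>) P + cscale \<i> (mat 1)"

lemma trace_tilt_proj_mult:
  assumes "orth_proj k (P'::complex^'n^'n)"
  shows "trace (tilt_proj P ** P') = (1 - \<i>) * trace (P ** P') + \<i> * of_nat k"
  using orth_projD(3)[OF assms]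
  by (simp add: tilt_proj_def matrix_mul_add_rdistrib trace_add trace_cscale_mult)

lemma trace_tilt_proj_mult_real:
  assumes "orth_proj k (P'::complex^'n^'n)" "trace (P ** P') = complex_of_real a"
  shows "trace (tilt_proj P ** P') = Complex a (real k - a)"
  using trace_tilt_proj_mult[OF assms(1), of P] assms(2) by (simp add: complex_eq_iff)

lemma wk_tilt_proj:
  assumes "orth_proj k (P::complex^'n^'n)"
  shows "wk k (tilt_proj P) = real k"
  unfolding wk_def
proof (rule cSup_eq_maximum)
  have "trace (tilt_proj P ** P) = of_nat k"
    using orth_projD(2,3)[OF assms] trace_tilt_proj_mult[OF assms, of P] by (simp add: algebra_simps)
  then show "real k \<in> {cmod (trace (tilt_proj P ** P')) |P'. orth_proj k P'}"
    using assms by force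
next
  fix x assume "x \<in> {cmod (trace (tilt_proj P ** P')) |P'. orth_proj k P'}"
  then obtain P' where P': "orth_proj k P'" and x: "x = cmod (trace (tilt_proj P ** P'))"
    by auto
  obtain a where a: "trace (P ** P') = complex_of_real a" "0 \<le> a" "a \<le> real k"
    using trace_orth_proj_mult_bounds[OF assms P'] .
  have "x = sqrt (a\<^sup>2 + (real k - a)\<^sup>2)"
    using x trace_tilt_proj_mult_real[OF P' a(1)] by (simp add: cmod_def)
  also have "\<dots> \<le> sqrt ((real k)\<^sup>2)"
  proof (rule real_sqrt_le_mono)
    have "a * a \<le> a * real k"
      using a by (intro mult_left_mono) auto
    then show "a\<^sup>2 + (real k - a)\<^sup>2 \<le> (real k)\<^sup>2"
      by (simp add: power2_eq_square algebra_simps)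
  qed
  finally show "x \<le> real k"
    by simp
qed

lemma tilt_proj_in_Sset: "orth_proj k (P::complex^'n^'n) \<Longrightarrow> tilt_proj P \<in> Sset k P"
  unfolding Sset_def
  using trace_tilt_proj_mult[of k P P] wk_tilt_proj[of k P] orth_projD(2,3)[of k P]
  by (simp add: algebra_simps)

lemma subspace_Im_trace_mult_eq_0:
  "subspace {X. Im (c * trace (X ** (Q::complex^'n^'n))) = 0}"
  unfolding subspace_def
proof (intro conjI ballI allI)
  show "0 \<in> {X. Im (c * trace (X ** Q)) = 0}"
    by (simp add: trace_def)
next
  fix X Y assume "X \<in> {X. Im (c * trace (X ** Q)) = 0}" "Y \<in> {X. Im (c * trace (X ** Q)) = 0}"
  then show "X + Y \<in> {X. Im (c * trace (X ** Q)) = 0}"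
    by (simp add: matrix_mul_add_rdistrib trace_add distrib_left)
next
  fix r :: real and X assume X: "X \<in> {X. Im (c * trace (X ** Q)) = 0}"
  have "trace ((r *\<^sub>R X) ** Q) = complex_of_real r * trace (X ** Q)"
    by (simp only: trace_cscale_mult flip: cscale_of_real)
  then have "Im (c * trace ((r *\<^sub>R X) ** Q)) = r * Im (c * trace (X ** Q))"
    by (simp add: mult.left_commute[of c])
  with X show "r *\<^sub>R X \<in> {X. Im (c * trace (X ** Q)) = 0}"
    by simp
qed

lemma span_cscale_cis_Sset_subset:
  "span (cscale (cis t) ` Sset k (Q::complex^'n^'n)) \<subseteq> {X. Im (cnj (cis t) * trace (X ** Q)) = 0}"
proof (rule span_minimal[OF _ subspace_Im_trace_mult_eq_0], clarify)
  fix B assume "B \<in> Sset k Q"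
  then show "Im (cnj (cis t) * trace (cscale (cis t) B ** Q)) = 0"
    by (simp add: Sset_def trace_cscale_mult cis_cnj mult.assoc[symmetric] cis_mult)
qed

lemma Im_cis_trace_mult_eq_0_if_span_subset:
  assumes "span (cscale (cis \<theta>1) ` Sset k P) \<subseteq> span (cscale (cis \<theta>2) ` Sset k (Q::complex^'n^'n))"
    and "B \<in> Sset k P"
  shows "Im (cis (\<theta>1 - \<theta>2) * trace (B ** Q)) = 0"
proof -
  have "cscale (cis \<theta>1) B \<in> span (cscale (cis \<theta>2) ` Sset k Q)"
    using assms by (blast intro: span_base)
  then have "Im (cnj (cis \<theta>2) * (cis \<theta>1 * trace (B ** Q))) = 0"
    using span_cscale_cis_Sset_subset[of \<theta>2 k Q] by (auto simp: trace_cscale_mult)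
  then show ?thesis
    by (simp add: cis_cnj mult.assoc[symmetric] cis_mult)
qed

lemma eq_if_span_cscale_cis_Sset_subset:
  assumes "1 \<le> k" "orth_proj k P" "orth_proj k (Q::complex^'n^'n)"
    and "span (cscale (cis \<theta>1) ` Sset k P) \<subseteq> span (cscale (cis \<theta>2) ` Sset k Q)"
  shows "P = Q \<and> sin (\<theta>1 - \<theta>2) = 0"
proof -
  have "Im (cis (\<theta>1 - \<theta>2) * trace (mat 1 ** Q)) = 0"
    using Im_cis_trace_mult_eq_0_if_span_subset[OF assms(4) mat_1_in_Sset[OF assms(2)]] .
  then have sin: "sin (\<theta>1 - \<theta>2) = 0"
    using orth_projD(3)[OF assms(3)] assms(1) by simp
  obtain a where a: "trace (P ** Q) = complex_of_real a"
    using trace_orth_proj_mult_bounds[OF assms(2,3)] by blast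
  have "Im (cis (\<theta>1 - \<theta>2) * trace (tilt_proj P ** Q)) = 0"
    using Im_cis_trace_mult_eq_0_if_span_subset[OF assms(4) tilt_proj_in_Sset[OF assms(2)]] .
  then have "cos (\<theta>1 - \<theta>2) * (real k - a) = 0"
    using sin trace_tilt_proj_mult_real[OF assms(3) a] by simp
  moreover have "cos (\<theta>1 - \<theta>2) \<noteq> 0"
    using sin_zero_abs_cos_one[OF sin] by auto
  ultimately have "a = real k"
    by simp
  then have "trace (P ** Q) = of_nat k"
    using a by simp
  with sin show ?thesis
    using orth_proj_eq_if_trace_mult[OF assms(2,3)] by blast
qed

lemma span_scaleR_image:
  fixes T :: "'a::real_vector set"
  assumes "r \<noteq> 0"
  shows "span ((*\<^sub>R) r ` T) = span T"
proof -
  have sub: "span ((*\<^sub>R) c ` S) \<subseteq> span S" for c and S :: "'a set"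
    by (rule span_minimal) (auto intro: span_mul span_base)
  have "T = (*\<^sub>R) (inverse r) ` (*\<^sub>R) r ` T"
    using assms by (simp add: image_image)
  then have "span T \<subseteq> span ((*\<^sub>R) r ` T)"
    by (metis sub)
  with sub show ?thesis
    by blast
qed

lemma span_cscale_cis_eq_if_sin_diff_eq_0:
  assumes "sin (\<theta>1 - \<theta>2) = 0"
  shows "span (cscale (cis \<theta>1) ` T) = span (cscale (cis \<theta>2) ` (T::(complex^'n^'n) set))"
proof -
  have "cis (\<theta>1 - \<theta>2) = complex_of_real (cos (\<theta>1 - \<theta>2))"
    using assms by (simp add: complex_eq_iff)
  then have "cis \<theta>1 = complex_of_real (cos (\<theta>1 - \<theta>2)) * cis \<theta>2"
    by (metis cis_mult diff_add_cancel)
  then have rotate: "cscale (cis \<theta>1) B = cos (\<theta>1 - \<theta>2) *\<^sub>R cscale (cis \<theta>2) B" for B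
    by (simp add: cscale_cscale flip: cscale_of_real)
  have "cscale (cis \<theta>1) ` T = (*\<^sub>R) (cos (\<theta>1 - \<theta>2)) ` cscale (cis \<theta>2) ` T"
    unfolding image_image rotate ..
  moreover have "cos (\<theta>1 - \<theta>2) \<noteq> 0"
    using sin_zero_abs_cos_one[OF assms] by auto
  ultimately show ?thesis
    by (simp add: span_scaleR_image)
qed

theorem mainTheorem4:
  fixes P Q :: "complex^'n^'n" and k :: nat and \<theta>1 \<theta>2 :: real
  assumes "1 \<le> k" and "k < CARD('n)"
    and "orth_proj k P" and "orth_proj k Q"
  shows "span (cscale (cis \<theta>1) ` Sset k P) = span (cscale (cis \<theta>2) ` Sset k Q)
         \<longleftrightarrow> P = Q \<and> (\<exists>m::int. \<theta>1 - \<theta>2 = of_int m * pi)"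
proof -
  have "span (cscale (cis \<theta>1) ` Sset k P) = span (cscale (cis \<theta>2) ` Sset k Q)
        \<longleftrightarrow> P = Q \<and> sin (\<theta>1 - \<theta>2) = 0"
    using eq_if_span_cscale_cis_Sset_subset[OF assms(1,3,4)]
      span_cscale_cis_eq_if_sin_diff_eq_0[of \<theta>1 \<theta>2 "Sset k P"]
    by blast
  then show ?thesis
    by (simp add: sin_zero_iff_int2)
qed

end
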